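(* For $k=1,\dots,K$, let $\mathcal{P}^k$ be a family of probability densities on $\mathbb{R}^n$, and let $X^k_1,X^k_2\subset\mathbb{R}^n$ be nonempty closed convex non-intersecting sets, one of them bounded. Let $(x^{1}_{k*},x^{2}_{k*})$ minimize $\|x^1-x^2\|_2$ over $x^1\in X^k_1,x^2\in X^k_2$ and set $h_k=(x^1_{k*}-x^2_{k*})/\|x^1_{k*}-x^2_{k*}\|_2$, $c_k=\tfrac12h_k^T(x^1_{k*}+x^2_{k*})$, $\delta_k=\tfrac12\|x^1_{k*}-x^2_{k*}\|_2$. Given potentials $\eta_1,\dots,\eta_K$, define $\phi_k(\omega)=\eta_k(h_k^T\omega-c_k)$ and $\phi^{(K)}(\omega_1,\dots,\omega_K)=\sum_{k=1}^K\phi_k(\omega_k)$. Then (a) for all $x_k\in X^k_1$, $p_k\in\mathcal{P}^k$, $k\le K$: $\int e^{-\phi^{(K)}(x_1+\xi_1,\dots,x_K+\xi_K)}\prod_{k=1}^K p_k(\xi_k)d\xi_k\le\prod_{k=1}^K\mathrm{risk}_{\delta_k}(\eta_k|\mathcal{P}^k)$; (b) for all $x_k\in X^k_2$, $p_k\in\mathcal{P}^k$, $k\le K$: $\int e^{\phi^{(K)}(x_1+\xi_1,\dots,x_K+\xi_K)}\prod_{k=1}^K p_k(\xi_k)d\xi_k\le\prod_{k=1}^K\mathrm{risk}_{\delta_k}(\eta_k|\mathcal{P}^k)$.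
   Context: A potential is an odd, nondecreasing Borel function $\eta:\mathbb{R}\to\mathbb{R}$. For a family $\mathcal{P}$ of probability densities on $\mathbb{R}^n$, $\delta\ge0$ and a potential $\eta$, the $\delta$-risk $\mathrm{risk}_\delta(\eta|\mathcal{P})$ is the smallest $\epsilon$ such that for all $e\in\mathbb{R}^n$ with $\|e\|_2=1$ and all $p\in\mathcal{P}$: $\int e^{-\eta(\delta+e^T\xi)}p(\xi)d\xi\le\epsilon$ and $\int e^{\eta(e^T\xi-\delta)}p(\xi)d\xi\le\epsilon$. *)

theory Defs
  imports "HOL-Probability.Probability"
begin

definition potential :: "(real \<Rightarrow> real) \<Rightarrow> bool" where
  "potential \<eta> \<longleftrightarrow> \<eta> \<in> borel_measurable borel \<and> mono \<eta> \<and> (\<forall>x. \<eta> (- x) = - \<eta> x)"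

definition prob_density :: "('a::euclidean_space \<Rightarrow> real) \<Rightarrow> bool" where
  "prob_density p \<longleftrightarrow> p \<in> borel_measurable lborel \<and> (\<forall>x. 0 \<le> p x)
     \<and> (\<integral>\<^sup>+ x. ennreal (p x) \<partial>lborel) = 1"

definition risk :: "real \<Rightarrow> (real \<Rightarrow> real) \<Rightarrow> ('a::euclidean_space \<Rightarrow> real) set \<Rightarrow> ennreal" where
  "risk \<delta> \<eta> P = Inf {\<epsilon>. \<forall>e::'a. norm e = 1 \<longrightarrow> (\<forall>p\<in>P.
      (\<integral>\<^sup>+ \<xi>. ennreal (exp (- \<eta> (\<delta> + e \<bullet> \<xi>)) * p \<xi>) \<partial>lborel) \<le> \<epsilon> \<and>
      (\<integral>\<^sup>+ \<xi>. ennreal (exp (\<eta> (e \<bullet> \<xi> - \<delta>)) * p \<xi>) \<partial>lborel) \<le> \<epsilon>)}"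

end

theory Submission
  imports Defs
begin

text \<open>
  In each block the hyperplane \<open>h\<^sub>k \<bullet> \<omega> = c\<^sub>k\<close> bisects the segment between the closest points,
  so \<open>X\<^sub>1\<^sup>k\<close> lies at signed distance at least \<open>\<delta>\<^sub>k\<close> on its positive side and \<open>X\<^sub>2\<^sup>k\<close> at signed
  distance at least \<open>\<delta>\<^sub>k\<close> on its negative side. As \<open>\<eta>\<^sub>k\<close> is nondecreasing, the k-th factor of the
  integrand is dominated pointwise by the integrand defining \<open>risk\<^sub>\<delta>\<^sub>k\<close> with the unit vector
  \<open>e = h\<^sub>k\<close>. The exponential of the sum is a product, so the integral against the product
  density factorises by Tonelli.
\<close>

lemma closest_point_inner_nonneg:
  fixes x z a :: "'a::euclidean_space"
  assumes "convex S" "closed S" "x \<in> S" "a \<in> S"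
    and "\<And>y. y \<in> S \<Longrightarrow> norm (x - z) \<le> norm (y - z)"
  shows "0 \<le> (x - z) \<bullet> (a - x)"
proof -
  have "(z - x) \<bullet> (a - x) \<le> 0"
    using assms by (intro any_closest_point_dot[of S]) (auto simp: dist_norm norm_minus_commute)
  then show ?thesis
    by (simp add: inner_diff_left)
qed

lemma closest_pair_margin:
  fixes x1 x2 a :: "'a::euclidean_space"
  assumes "convex S" "closed S" "x1 \<in> S" "a \<in> S" "x1 \<noteq> x2"
    and "\<And>y. y \<in> S \<Longrightarrow> norm (x1 - x2) \<le> norm (y - x2)"
  shows "(1/2) * norm (x1 - x2) \<le>
    ((1 / norm (x1 - x2)) *\<^sub>R (x1 - x2)) \<bullet> a
      - (1/2) * (((1 / norm (x1 - x2)) *\<^sub>R (x1 - x2)) \<bullet> (x1 + x2))"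
proof -
  define d where "d = x1 - x2"
  have d_pos: "0 < norm d"
    using \<open>x1 \<noteq> x2\<close> by (simp add: d_def)
  have "d \<bullet> x1 \<le> d \<bullet> a"
    using closest_point_inner_nonneg[OF assms(1-4,6)] by (simp add: d_def inner_diff_right)
  then have "(1/2) * (d \<bullet> d) \<le> d \<bullet> a - (1/2) * (d \<bullet> (x1 + x2))"
    by (simp add: d_def inner_diff_right inner_add_right algebra_simps)
  then have "(1/2) * (d \<bullet> d) / norm d \<le> (d \<bullet> a - (1/2) * (d \<bullet> (x1 + x2))) / norm d"
    using d_pos by (intro divide_right_mono) auto
  moreover have "(1/2) * (d \<bullet> d) / norm d = (1/2) * norm d"
    using d_pos by (simp add: power2_norm_eq_inner[symmetric] power2_eq_square)
  moreover have "((1 / norm d) *\<^sub>R d) \<bullet> a - (1/2) * (((1 / norm d) *\<^sub>R d) \<bullet> (x1 + x2))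
      = (d \<bullet> a - (1/2) * (d \<bullet> (x1 + x2))) / norm d"
    using d_pos by (simp add: field_simps)
  ultimately show ?thesis
    unfolding d_def[symmetric] by linarith
qed

lemma closest_pair_separation:
  fixes x1 x2 :: "'a::euclidean_space"
  assumes "convex S1" "closed S1" "convex S2" "closed S2" "x1 \<in> S1" "x2 \<in> S2" "x1 \<noteq> x2"
    and min: "\<And>a b. a \<in> S1 \<Longrightarrow> b \<in> S2 \<Longrightarrow> norm (x1 - x2) \<le> norm (a - b)"
    and h_def: "h = (1 / norm (x1 - x2)) *\<^sub>R (x1 - x2)"
    and c_def: "c = (1/2) * (h \<bullet> (x1 + x2))"
    and \<delta>_def: "\<delta> = (1/2) * norm (x1 - x2)"
  shows "a \<in> S1 \<Longrightarrow> \<delta> \<le> h \<bullet> a - c"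
    and "b \<in> S2 \<Longrightarrow> h \<bullet> b - c \<le> - \<delta>"
proof -
  show "\<delta> \<le> h \<bullet> a - c" if "a \<in> S1"
    using closest_pair_margin[of S1 x1 a x2] assms(1,2,5,7) min[OF _ \<open>x2 \<in> S2\<close>] that
    unfolding h_def c_def \<delta>_def by blast
  \<comment> \<open>Exchanging the roles of the two sets flips the signs of h and c and keeps \<open>\<delta>\<close>.\<close>
  show "h \<bullet> b - c \<le> - \<delta>" if "b \<in> S2"
  proof -
    have "(1/2) * norm (x2 - x1) \<le>
        ((1 / norm (x2 - x1)) *\<^sub>R (x2 - x1)) \<bullet> b
          - (1/2) * (((1 / norm (x2 - x1)) *\<^sub>R (x2 - x1)) \<bullet> (x2 + x1))"
      using assms(3,4,6,7) that min[OF \<open>x1 \<in> S1\<close>]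
      by (intro closest_pair_margin[of S2]) (auto simp: norm_minus_commute)
    moreover have "x2 - x1 = - (x1 - x2)" "x2 + x1 = x1 + x2"
      by simp_all
    ultimately show ?thesis
      unfolding h_def c_def \<delta>_def
      by (simp only: norm_minus_cancel inner_minus_left scaleR_minus_right)
  qed
qed

lemma nn_integral_exp_neg_le_risk:
  fixes P :: "('a::euclidean_space \<Rightarrow> real) set"
  assumes "norm e = 1" "p \<in> P"
  shows "(\<integral>\<^sup>+ \<xi>. ennreal (exp (- \<eta> (\<delta> + e \<bullet> \<xi>)) * p \<xi>) \<partial>lborel) \<le> risk \<delta> \<eta> P"
  unfolding risk_def using assms by (auto intro!: Inf_greatest)

lemma nn_integral_exp_le_risk:
  fixes P :: "('a::euclidean_space \<Rightarrow> real) set"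
  assumes "norm e = 1" "p \<in> P"
  shows "(\<integral>\<^sup>+ \<xi>. ennreal (exp (\<eta> (e \<bullet> \<xi> - \<delta>)) * p \<xi>) \<partial>lborel) \<le> risk \<delta> \<eta> P"
  unfolding risk_def using assms by (auto intro!: Inf_greatest)

lemma nn_integral_exp_neg_shifted_le_risk:
  fixes P :: "('a::euclidean_space \<Rightarrow> real) set"
  assumes "mono \<eta>" "norm h = 1" "p \<in> P" "\<And>y. 0 \<le> p y" "\<delta> \<le> h \<bullet> x - c"
  shows "(\<integral>\<^sup>+ y. ennreal (exp (- \<eta> (h \<bullet> (x + y) - c)) * p y) \<partial>lborel) \<le> risk \<delta> \<eta> P"
proof -
  have "\<eta> (\<delta> + h \<bullet> y) \<le> \<eta> (h \<bullet> (x + y) - c)" for y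
    using assms(5) by (intro monoD[OF \<open>mono \<eta>\<close>]) (simp add: inner_add_right)
  then have "(\<integral>\<^sup>+ y. ennreal (exp (- \<eta> (h \<bullet> (x + y) - c)) * p y) \<partial>lborel)
      \<le> (\<integral>\<^sup>+ y. ennreal (exp (- \<eta> (\<delta> + h \<bullet> y)) * p y) \<partial>lborel)"
    using assms(4) by (intro nn_integral_mono ennreal_leI mult_right_mono) auto
  also have "\<dots> \<le> risk \<delta> \<eta> P"
    using nn_integral_exp_neg_le_risk[OF assms(2,3)] .
  finally show ?thesis .
qed

lemma nn_integral_exp_shifted_le_risk:
  fixes P :: "('a::euclidean_space \<Rightarrow> real) set"
  assumes "mono \<eta>" "norm h = 1" "p \<in> P" "\<And>y. 0 \<le> p y" "h \<bullet> x - c \<le> - \<delta>"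
  shows "(\<integral>\<^sup>+ y. ennreal (exp (\<eta> (h \<bullet> (x + y) - c)) * p y) \<partial>lborel) \<le> risk \<delta> \<eta> P"
proof -
  have "\<eta> (h \<bullet> (x + y) - c) \<le> \<eta> (h \<bullet> y - \<delta>)" for y
    using assms(5) by (intro monoD[OF \<open>mono \<eta>\<close>]) (simp add: inner_add_right)
  then have "(\<integral>\<^sup>+ y. ennreal (exp (\<eta> (h \<bullet> (x + y) - c)) * p y) \<partial>lborel)
      \<le> (\<integral>\<^sup>+ y. ennreal (exp (\<eta> (h \<bullet> y - \<delta>)) * p y) \<partial>lborel)"
    using assms(4) by (intro nn_integral_mono ennreal_leI mult_right_mono) auto
  also have "\<dots> \<le> risk \<delta> \<eta> P"
    using nn_integral_exp_le_risk[OF assms(2,3)] .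
  finally show ?thesis .
qed

lemma nn_integral_PiM_prod:
  fixes f :: "'i \<Rightarrow> 'a \<Rightarrow> real"
  assumes "sigma_finite_measure M" "finite I"
    and "\<And>k. k \<in> I \<Longrightarrow> f k \<in> borel_measurable M" "\<And>k y. k \<in> I \<Longrightarrow> 0 \<le> f k y"
  shows "(\<integral>\<^sup>+ \<xi>. ennreal (\<Prod>k\<in>I. f k (\<xi> k)) \<partial>PiM I (\<lambda>_. M))
      = (\<Prod>k\<in>I. \<integral>\<^sup>+ y. ennreal (f k y) \<partial>M)"
proof -
  interpret product_sigma_finite "\<lambda>_. M"
    using assms(1) by (simp add: product_sigma_finite_def)
  have "(\<integral>\<^sup>+ \<xi>. ennreal (\<Prod>k\<in>I. f k (\<xi> k)) \<partial>PiM I (\<lambda>_. M))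
      = (\<integral>\<^sup>+ \<xi>. (\<Prod>k\<in>I. ennreal (f k (\<xi> k))) \<partial>PiM I (\<lambda>_. M))"
    using assms(4) by (intro nn_integral_cong) (simp add: prod_ennreal)
  also have "\<dots> = (\<Prod>k\<in>I. \<integral>\<^sup>+ y. ennreal (f k y) \<partial>M)"
    using assms(2,3) by (intro product_nn_integral_prod) auto
  finally show ?thesis .
qed

lemma nn_integral_exp_sum_prod_le:
  fixes g p :: "'i \<Rightarrow> 'a \<Rightarrow> real"
  assumes "sigma_finite_measure M" "finite I"
    and "\<And>k. k \<in> I \<Longrightarrow> g k \<in> borel_measurable M" "\<And>k. k \<in> I \<Longrightarrow> p k \<in> borel_measurable M"
    and "\<And>k y. k \<in> I \<Longrightarrow> 0 \<le> p k y"
    and "\<And>k. k \<in> I \<Longrightarrow> (\<integral>\<^sup>+ y. ennreal (exp (g k y) * p k y) \<partial>M) \<le> B k"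
  shows "(\<integral>\<^sup>+ \<xi>. ennreal (exp (\<Sum>k\<in>I. g k (\<xi> k)) * (\<Prod>k\<in>I. p k (\<xi> k))) \<partial>PiM I (\<lambda>_. M))
      \<le> (\<Prod>k\<in>I. B k)"
proof -
  have "(\<integral>\<^sup>+ \<xi>. ennreal (exp (\<Sum>k\<in>I. g k (\<xi> k)) * (\<Prod>k\<in>I. p k (\<xi> k))) \<partial>PiM I (\<lambda>_. M))
      = (\<integral>\<^sup>+ \<xi>. ennreal (\<Prod>k\<in>I. exp (g k (\<xi> k)) * p k (\<xi> k)) \<partial>PiM I (\<lambda>_. M))"
    using assms(2) by (simp add: exp_sum prod.distrib)
  also have "\<dots> = (\<Prod>k\<in>I. \<integral>\<^sup>+ y. ennreal (exp (g k y) * p k y) \<partial>M)"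
    using assms(1-5) by (intro nn_integral_PiM_prod) auto
  also have "\<dots> \<le> (\<Prod>k\<in>I. B k)"
    using assms(6) by (rule prod_mono_ennreal)
  finally show ?thesis .
qed

theorem proposition2p10:
  fixes K :: nat
    and P :: "nat \<Rightarrow> ('a::euclidean_space \<Rightarrow> real) set"
    and X1 X2 :: "nat \<Rightarrow> 'a set"
    and x1s x2s :: "nat \<Rightarrow> 'a"
    and \<eta> :: "nat \<Rightarrow> real \<Rightarrow> real"
    and h :: "nat \<Rightarrow> 'a" and c \<delta> :: "nat \<Rightarrow> real"
    and \<phi>K :: "(nat \<Rightarrow> 'a) \<Rightarrow> real"
  assumes P_dens: "\<And>k p. k \<in> {1..K} \<Longrightarrow> p \<in> P k \<Longrightarrow> prob_density p"
    and X_ne: "\<And>k. k \<in> {1..K} \<Longrightarrow> X1 k \<noteq> {} \<and> X2 k \<noteq> {}"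
    and X_closed: "\<And>k. k \<in> {1..K} \<Longrightarrow> closed (X1 k) \<and> closed (X2 k)"
    and X_convex: "\<And>k. k \<in> {1..K} \<Longrightarrow> convex (X1 k) \<and> convex (X2 k)"
    and X_disj: "\<And>k. k \<in> {1..K} \<Longrightarrow> X1 k \<inter> X2 k = {}"
    and X_bdd: "\<And>k. k \<in> {1..K} \<Longrightarrow> bounded (X1 k) \<or> bounded (X2 k)"
    and x_mem: "\<And>k. k \<in> {1..K} \<Longrightarrow> x1s k \<in> X1 k \<and> x2s k \<in> X2 k"
    and x_min: "\<And>k a b. k \<in> {1..K} \<Longrightarrow> a \<in> X1 k \<Longrightarrow> b \<in> X2 k \<Longrightarrow>
                  norm (x1s k - x2s k) \<le> norm (a - b)"
    and h_def: "\<And>k. h k = (1 / norm (x1s k - x2s k)) *\<^sub>R (x1s k - x2s k)"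
    and c_def: "\<And>k. c k = (1/2) * (h k \<bullet> (x1s k + x2s k))"
    and \<delta>_def: "\<And>k. \<delta> k = (1/2) * norm (x1s k - x2s k)"
    and pot: "\<And>k. k \<in> {1..K} \<Longrightarrow> potential (\<eta> k)"
    and \<phi>K_def: "\<And>\<omega>. \<phi>K \<omega> = (\<Sum>k\<in>{1..K}. \<eta> k (h k \<bullet> \<omega> k - c k))"
  shows "(\<forall>x p. (\<forall>k\<in>{1..K}. x k \<in> X1 k \<and> p k \<in> P k) \<longrightarrow>
            (\<integral>\<^sup>+ \<xi>. ennreal (exp (- \<phi>K (\<lambda>k. x k + \<xi> k)) * (\<Prod>k\<in>{1..K}. p k (\<xi> k)))
               \<partial>(PiM {1..K} (\<lambda>_. lborel)))
            \<le> (\<Prod>k\<in>{1..K}. risk (\<delta> k) (\<eta> k) (P k)))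
       \<and> (\<forall>x p. (\<forall>k\<in>{1..K}. x k \<in> X2 k \<and> p k \<in> P k) \<longrightarrow>
            (\<integral>\<^sup>+ \<xi>. ennreal (exp (\<phi>K (\<lambda>k. x k + \<xi> k)) * (\<Prod>k\<in>{1..K}. p k (\<xi> k)))
               \<partial>(PiM {1..K} (\<lambda>_. lborel)))
            \<le> (\<Prod>k\<in>{1..K}. risk (\<delta> k) (\<eta> k) (P k)))"
proof -
  \<comment> \<open>\<open>X_ne\<close> and \<open>X_bdd\<close> only ensure that a closest pair exists; here it is given.\<close>
  have x_ne: "x1s k \<noteq> x2s k" if "k \<in> {1..K}" for k
    using X_disj[OF that] x_mem[OF that] by auto
  have h_unit: "norm (h k) = 1" if "k \<in> {1..K}" for k
    using x_ne[OF that] by (simp add: h_def)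
  have margin1: "\<delta> k \<le> h k \<bullet> a - c k" if k: "k \<in> {1..K}" and "a \<in> X1 k" for k a
    using closest_pair_separation(1)[of "X1 k" "X2 k" "x1s k" "x2s k"] X_convex[OF k]
      X_closed[OF k] x_mem[OF k] x_ne[OF k] x_min[OF k] h_def c_def \<delta>_def that by auto
  have margin2: "h k \<bullet> b - c k \<le> - \<delta> k" if k: "k \<in> {1..K}" and "b \<in> X2 k" for k b
    using closest_pair_separation(2)[of "X1 k" "X2 k" "x1s k" "x2s k"] X_convex[OF k]
      X_closed[OF k] x_mem[OF k] x_ne[OF k] x_min[OF k] h_def c_def \<delta>_def that by auto
  have \<eta>_meas[measurable]: "\<eta> k \<in> borel_measurable borel" and \<eta>_mono: "mono (\<eta> k)"
    if "k \<in> {1..K}" for k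
    using pot[OF that] by (auto simp: potential_def)
  have p_meas[measurable]: "p \<in> borel_measurable lborel" and p_nonneg: "0 \<le> p y"
    if "k \<in> {1..K}" "p \<in> P k" for k p y
    using P_dens[OF that] by (auto simp: prob_density_def)
  have \<sigma>: "sigma_finite_measure (lborel :: 'a measure)"
    by (rule lborel.sigma_finite_measure_axioms)
  show ?thesis
  proof (intro conjI allI impI)
    fix x :: "nat \<Rightarrow> 'a" and p assume H: "\<forall>k\<in>{1..K}. x k \<in> X1 k \<and> p k \<in> P k"
    show "(\<integral>\<^sup>+ \<xi>. ennreal (exp (- \<phi>K (\<lambda>k. x k + \<xi> k)) * (\<Prod>k\<in>{1..K}. p k (\<xi> k)))
        \<partial>(PiM {1..K} (\<lambda>_. lborel))) \<le> (\<Prod>k\<in>{1..K}. risk (\<delta> k) (\<eta> k) (P k))"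
      unfolding \<phi>K_def sum_negf[symmetric] using H
      by (intro nn_integral_exp_sum_prod_le[OF \<sigma>] nn_integral_exp_neg_shifted_le_risk)
        (auto intro: \<eta>_mono h_unit p_nonneg margin1)
  next
    fix x :: "nat \<Rightarrow> 'a" and p assume H: "\<forall>k\<in>{1..K}. x k \<in> X2 k \<and> p k \<in> P k"
    show "(\<integral>\<^sup>+ \<xi>. ennreal (exp (\<phi>K (\<lambda>k. x k + \<xi> k)) * (\<Prod>k\<in>{1..K}. p k (\<xi> k)))
        \<partial>(PiM {1..K} (\<lambda>_. lborel))) \<le> (\<Prod>k\<in>{1..K}. risk (\<delta> k) (\<eta> k) (P k))"
      unfolding \<phi>K_def using H
      by (intro nn_integral_exp_sum_prod_le[OF \<sigma>] nn_integral_exp_shifted_le_risk)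
        (auto intro: \<eta>_mono h_unit p_nonneg margin2)
  qed
qed

end
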